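(* Let $k\ge 2$ and let $U_k$ be the binary matrix whose columns are indexed by the integers $1,\dots,2^k-1$ and whose rows are indexed by those integers $r\in\{1,\dots,2^k-1\}$ that are not powers of $2$ (so $U_k$ has $2^k-1-k$ rows), where the row indexed by $r$, with $2^t<r<2^{t+1}$ for the integer $t$, has its $1$-entries exactly in the columns indexed by $r$, $r-2^t$ and $2^t$. Then $u(U_k)=\varepsilon(U_k)=2^{k-1}$.
   Context: All matrices are binary. For a nonempty set $S$ of columns of a binary matrix, let $z$ be the sum over the integers of the columns in $S$. $S$ is called $1$-free if no entry of $z$ equals $1$, and even if all entries of $z$ are even. For a binary $m\times n$ matrix $A$ with $m<n$: $\varepsilon(A)$ is the smallest cardinality of a nonempty even set of columns of $A$, and $u(A)$ is the smallest cardinality of a nonempty $1$-free set of columns of $A$. *)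

theory Defs
  imports Main
begin

text \<open>A binary matrix is given by a finite set of row indices R, a finite set of
column indices C and an entry predicate A (A r c means entry (r,c) is 1).\<close>

definition col_sum :: "('r \<Rightarrow> 'c \<Rightarrow> bool) \<Rightarrow> 'c set \<Rightarrow> 'r \<Rightarrow> nat" where
  "col_sum A S r = card {c \<in> S. A r c}"

definition one_free_set :: "'r set \<Rightarrow> 'c set \<Rightarrow> ('r \<Rightarrow> 'c \<Rightarrow> bool) \<Rightarrow> 'c set \<Rightarrow> bool" where
  "one_free_set R C A S \<longleftrightarrow> S \<subseteq> C \<and> S \<noteq> {} \<and> (\<forall>r\<in>R. col_sum A S r \<noteq> 1)"

definition even_set :: "'r set \<Rightarrow> 'c set \<Rightarrow> ('r \<Rightarrow> 'c \<Rightarrow> bool) \<Rightarrow> 'c set \<Rightarrow> bool" where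
  "even_set R C A S \<longleftrightarrow> S \<subseteq> C \<and> S \<noteq> {} \<and> (\<forall>r\<in>R. even (col_sum A S r))"

definition eps_mat :: "'r set \<Rightarrow> 'c set \<Rightarrow> ('r \<Rightarrow> 'c \<Rightarrow> bool) \<Rightarrow> nat" where
  "eps_mat R C A = (LEAST n. \<exists>S. even_set R C A S \<and> card S = n)"

definition u_mat :: "'r set \<Rightarrow> 'c set \<Rightarrow> ('r \<Rightarrow> 'c \<Rightarrow> bool) \<Rightarrow> nat" where
  "u_mat R C A = (LEAST n. \<exists>S. one_free_set R C A S \<and> card S = n)"

definition U_cols :: "nat \<Rightarrow> nat set" where
  "U_cols k = {1..2^k - 1}"

definition U_rows :: "nat \<Rightarrow> nat set" where
  "U_rows k = {r \<in> {1..2^k - 1}. \<not> (\<exists>t. r = 2^t)}"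

definition U_entry :: "nat \<Rightarrow> nat \<Rightarrow> bool" where
  "U_entry r c \<longleftrightarrow> (\<exists>t::nat. 2^t < r \<and> r < 2^(t+1) \<and> (c = r \<or> c = r - 2^t \<or> c = 2^t))"

end

theory Submission
  imports Defs
begin

text \<open>Write p = 2^(k-1). For 0 < s < p the row p + s of U_k meets exactly the columns
p + s, s and p, while every other row has its entries below p and forms a copy of U_(k-1).
Hence the top half {p, ..., 2p - 1} of the columns is an even set of size p. Conversely let S be
1-free. If p \<in> S, the row p + s forces S to meet each pair {s, p + s}, so |S| \<ge> p.
If p \<notin> S, the same row forces s \<in> S \<longleftrightarrow> p + s \<in> S, so S consists of two
copies of a 1-free set of U_(k-1), and induction gives |S| \<ge> 2 \<cdot> 2^(k-2).\<close>

lemma u_mat_eps_mat_eqI: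
  assumes "even_set R C A W" "card W = n"
    and "\<And>S. one_free_set R C A S \<Longrightarrow> n \<le> card S"
  shows "u_mat R C A = n \<and> eps_mat R C A = n"
proof -
  have even_one_free: "one_free_set R C A S" if "even_set R C A S" for S
    using that unfolding even_set_def one_free_set_def by (metis odd_one)
  show ?thesis
    unfolding u_mat_def eps_mat_def
    by (intro conjI Least_equality) (use assms even_one_free in blast)+
qed

lemma power2_bracket_unique:
  fixes r :: nat
  assumes "2^t \<le> r" "r < 2 * 2^t" "2^t' \<le> r" "r < 2 * 2^t'"
  shows "t = t'"
proof -
  have "(2::nat)^t < 2^Suc t'"
    using assms unfolding power_Suc by linarith
  then have "t < Suc t'"
    by (subst (asm) power_strict_increasing_iff) simp_all
  moreover have "(2::nat)^t' < 2^Suc t"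
    using assms unfolding power_Suc by linarith
  then have "t' < Suc t"
    by (subst (asm) power_strict_increasing_iff) simp_all
  ultimately show ?thesis
    by simp
qed

lemma U_entry_iff:
  assumes "2^t < r" "r < 2 * 2^t"
  shows "U_entry r c \<longleftrightarrow> c \<in> {r, r - 2^t, 2^t}"
proof
  assume "U_entry r c"
  then obtain t' where t': "2^t' < r" "r < 2 * 2^t'" "c \<in> {r, r - 2^t', 2^t'}"
    unfolding U_entry_def by auto
  have "t' = t"
    using power2_bracket_unique[OF less_imp_le[OF t'(1)] t'(2) less_imp_le[OF assms(1)] assms(2)] .
  then show "c \<in> {r, r - 2^t, 2^t}"
    using t'(3) by simp
next
  assume "c \<in> {r, r - 2^t, 2^t}"
  then show "U_entry r c"
    unfolding U_entry_def using assms by auto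
qed

lemma U_cols_eq: "U_cols k = {0<..<2^k}"
  unfolding U_cols_def by auto

lemma U_entry_le: "U_entry r c \<Longrightarrow> c \<le> r"
  unfolding U_entry_def by auto

lemma U_rows_level:
  assumes "r \<in> U_rows k"
  obtains t where "t < k" "2^t < r" "r < 2 * 2^t"
proof -
  have "1 \<le> r" "r < 2^k" "\<And>t. r \<noteq> 2^t"
    using assms unfolding U_rows_def by auto
  then obtain t where "2^t \<le> r" "r < 2 * 2^t"
    using ex_power_ivl1[of 2 r] by auto
  moreover have "2^t \<noteq> r"
    using \<open>\<And>t. r \<noteq> 2^t\<close> by metis
  ultimately have "2^t < r" "r < 2 * 2^t"
    by simp_all
  moreover have "(2::nat)^t < 2^k"
    using \<open>2^t < r\<close> \<open>r < 2^k\<close> by linarith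
  then have "t < k"
    by (subst (asm) power_strict_increasing_iff) simp_all
  ultimately show ?thesis
    using that by blast
qed

lemma U_rows_mono: "k \<le> l \<Longrightarrow> U_rows k \<subseteq> U_rows l"
proof -
  assume "k \<le> l"
  then have "(2::nat)^k - 1 \<le> 2^l - 1"
    by (simp add: diff_le_mono)
  then show ?thesis
    unfolding U_rows_def by auto
qed

lemma col_sum_U_row:
  assumes "0 < s" "s < 2^m"
  shows "col_sum U_entry S (2^m + s) = card (S \<inter> {2^m + s, s, 2^m})"
proof -
  have "{c \<in> S. U_entry (2^m + s) c} = S \<inter> {2^m + s, s, 2^m}"
    using U_entry_iff[of m "2^m + s"] assms by auto
  then show ?thesis
    unfolding col_sum_def by simp
qed

lemma U_row_in_U_rows:
  assumes "0 < s" "s < 2^m"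
  shows "2^m + s \<in> U_rows (Suc m)"
proof -
  have "2^m + s \<noteq> 2^t" for t :: nat
  proof (cases "t \<le> m")
    case True
    then have "(2::nat)^t \<le> 2^m" by (simp add: power_increasing)
    then show ?thesis using assms by linarith
  next
    case False
    then have "(2::nat)^Suc m \<le> 2^t" by (intro power_increasing) auto
    then show ?thesis using assms by simp
  qed
  then show ?thesis
    unfolding U_rows_def using assms by auto
qed

lemma one_free_U_row:
  assumes "one_free_set (U_rows (Suc m)) C U_entry S" "0 < s" "s < 2^m"
  shows "card (S \<inter> {2^m + s, s, 2^m}) \<noteq> 1"
proof -
  have "col_sum U_entry S (2^m + s) \<noteq> 1"
    using assms(1) U_row_in_U_rows[OF assms(2,3)] unfolding one_free_set_def by blast
  then show ?thesis
    using col_sum_U_row[OF assms(2,3)] by simp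
qed

lemma one_free_U_card_ge_if_pivot:
  assumes "one_free_set (U_rows (Suc m)) (U_cols (Suc m)) U_entry S" "2^m \<in> S"
  shows "2^m \<le> card S"
proof -
  define p :: nat where "p = 2^m"
  have "p \<in> S"
    using assms(2) unfolding p_def .
  have "S \<subseteq> {0<..<2^Suc m}"
    using assms(1) unfolding one_free_set_def U_cols_eq by simp
  then have fin: "finite S"
    by (rule finite_subset) simp
  have cover: "s \<in> S \<or> p + s \<in> S" if "0 < s" "s < p" for s
  proof (rule ccontr)
    assume "\<not> (s \<in> S \<or> p + s \<in> S)"
    with \<open>p \<in> S\<close> have "S \<inter> {p + s, s, p} = {p}"
      by blast
    then show False
      using one_free_U_row[OF assms(1), of s] that unfolding p_def by simp
  qed
  define f where "f s = (if s \<in> S then s else p + s)" for s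
  have "inj_on f {0<..<p}"
    unfolding f_def by (rule inj_onI) (auto split: if_splits)
  moreover have "f ` {0<..<p} \<subseteq> S - {p}"
  proof
    fix y assume "y \<in> f ` {0<..<p}"
    then obtain s where "0 < s" "s < p" "y = f s"
      by auto
    then show "y \<in> S - {p}"
      using cover[of s] unfolding f_def by auto
  qed
  ultimately have "card {0<..<p} \<le> card (S - {p})"
    using card_inj_on_le fin by blast
  then have "p - 1 \<le> card S - 1"
    using \<open>p \<in> S\<close> fin by simp
  moreover have "0 < card S"
    using \<open>p \<in> S\<close> fin card_gt_0_iff by blast
  ultimately show ?thesis
    unfolding p_def by linarith
qed

lemma one_free_U_halve:
  assumes "one_free_set (U_rows (Suc m)) (U_cols (Suc m)) U_entry S" "2^m \<notin> S"
  defines "L \<equiv> S \<inter> U_cols m"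
  shows "one_free_set (U_rows m) (U_cols m) U_entry L" "card S = 2 * card L"
proof -
  define p :: nat where "p = 2^m"
  have S_sub: "S \<subseteq> {0<..<2*p}" and "S \<noteq> {}"
    and S_rows: "\<forall>r\<in>U_rows (Suc m). col_sum U_entry S r \<noteq> 1"
    using assms(1) unfolding one_free_set_def U_cols_eq p_def by auto
  have L_eq: "L = S \<inter> {0<..<p}"
    unfolding L_def U_cols_eq p_def using S_sub by auto
  have shift: "s \<in> S \<longleftrightarrow> p + s \<in> S" if "0 < s" "s < p" for s
  proof (rule ccontr)
    assume "\<not> (s \<in> S \<longleftrightarrow> p + s \<in> S)"
    then have "card (S \<inter> {p + s, s, p}) = 1"
      using assms(2) unfolding p_def by (cases "s \<in> S") auto
    then show False using one_free_U_row[OF assms(1)] that unfolding p_def by blast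
  qed
  have S_eq: "S = L \<union> (+) p ` L"
  proof (intro equalityI subsetI)
    fix c assume "c \<in> S"
    then have "c \<noteq> p" "0 < c" "c < 2 * p"
      using assms(2) S_sub unfolding p_def by auto
    show "c \<in> L \<union> (+) p ` L"
    proof (cases "c < p")
      case True
      then show ?thesis using \<open>c \<in> S\<close> \<open>0 < c\<close> unfolding L_eq by auto
    next
      case False
      then have "c - p \<in> L" "c = p + (c - p)"
        using shift[of "c - p"] \<open>c \<in> S\<close> \<open>c \<noteq> p\<close> \<open>c < 2 * p\<close> unfolding L_eq by auto
      then show ?thesis by blast
    qed
  qed (use shift in \<open>auto simp: L_eq\<close>)
  have "finite L"
    unfolding L_def U_cols_def by simp
  moreover have "L \<inter> (+) p ` L = {}"
    unfolding L_eq by auto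
  ultimately show "card S = 2 * card L"
    by (subst S_eq) (simp add: card_Un_disjoint card_image)
  have "col_sum U_entry L r = col_sum U_entry S r" if "r \<in> U_rows m" for r
  proof -
    have "r < p" using that unfolding U_rows_def p_def by auto
    then have "{c \<in> S. U_entry r c} = {c \<in> L. U_entry r c}"
      using U_entry_le S_sub unfolding L_eq by fastforce
    then show ?thesis unfolding col_sum_def by simp
  qed
  moreover have "L \<noteq> {}"
    using S_eq \<open>S \<noteq> {}\<close> by auto
  ultimately show "one_free_set (U_rows m) (U_cols m) U_entry L"
    using S_rows U_rows_mono[of m "Suc m"] unfolding one_free_set_def L_def by auto
qed

lemma one_free_U_card_ge:
  "one_free_set (U_rows k) (U_cols k) U_entry S \<Longrightarrow> 2^(k-1) \<le> card S"
proof (induction k arbitrary: S)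
  case 0
  then show ?case unfolding one_free_set_def U_cols_def by auto
next
  case (Suc m)
  show ?case
  proof (cases "2^m \<in> S")
    case True
    then show ?thesis using one_free_U_card_ge_if_pivot[OF Suc.prems] by simp
  next
    case False
    with Suc.IH one_free_U_halve[OF Suc.prems] have "2 * 2^(m-1) \<le> card S"
      by simp
    moreover have "(2::nat)^m \<le> 2 * 2^(m-1)" by (cases m) auto
    ultimately show ?thesis by simp
  qed
qed

lemma even_set_U_top_half:
  "even_set (U_rows (Suc m)) (U_cols (Suc m)) U_entry {2^m..<2^Suc m}"
proof -
  have "even (col_sum U_entry {2^m..<2^Suc m} r)" if r: "r \<in> U_rows (Suc m)" for r
  proof -
    obtain t where "t < Suc m" "2^t < r" "r < 2 * 2^t"
      using U_rows_level[OF r] .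
    show ?thesis
    proof (cases "t < m")
      case True
      then have "(2::nat)^Suc t \<le> 2^m"
        by (intro power_increasing) simp_all
      then have "r < 2^m"
        using \<open>r < 2 * 2^t\<close> unfolding power_Suc by linarith
      then have "{c \<in> {2^m..<2^Suc m}. U_entry r c} = {}"
        by (auto dest: U_entry_le)
      then have "col_sum U_entry {2^m..<2^Suc m} r = 0"
        unfolding col_sum_def by (simp only: card.empty)
      then show ?thesis
        by simp
    next
      case False
      with \<open>t < Suc m\<close> have "t = m"
        by simp
      with \<open>2^t < r\<close> \<open>r < 2 * 2^t\<close> have "2^m < r" "r < 2 * 2^m"
        by (simp_all only:)
      define s where "s = r - 2^m"
      have s: "0 < s" "s < 2^m" "r = 2^m + s"
        using \<open>2^m < r\<close> \<open>r < 2 * 2^m\<close> unfolding s_def by auto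
      then have "{2^m..<2^Suc m} \<inter> {2^m + s, s, 2^m} = {2^m + s, 2^m}" by auto
      then show ?thesis using col_sum_U_row[of s m] s by simp
    qed
  qed
  moreover have "{2^m..<2^Suc m} \<subseteq> U_cols (Suc m)"
    unfolding U_cols_eq by auto
  ultimately show ?thesis
    unfolding even_set_def by simp
qed

theorem mainTheorem5:
  fixes k :: nat
  assumes "k \<ge> 2"
  shows "u_mat (U_rows k) (U_cols k) U_entry = 2^(k-1)
       \<and> eps_mat (U_rows k) (U_cols k) U_entry = 2^(k-1)"
proof -
  obtain m where k: "k = Suc m" using assms by (cases k) auto \<comment> \<open>k \<ge> 1 would suffice\<close>
  show ?thesis
    unfolding k
  proof (rule u_mat_eps_mat_eqI[OF even_set_U_top_half])
    show "card {(2::nat)^m..<2^Suc m} = 2^(Suc m - 1)"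
      by simp
  qed (rule one_free_U_card_ge)
qed

end
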